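(* Let $G$ be a graph of tree-width $k\geq 3$. Then the minor-3-core of $G$ also has tree-width $k$.
   Context: Graphs are simple and undirected. A minor of $G$ is a graph obtained from $G$ by vertex contractions (contracting a vertex $u$ into a neighbour $v$, i.e. an edge contraction keeping the name $v$) and subgraph operations. A minor-3-core of $G$ is a minor $H$ of $G$ with minimum degree at least $3$ such that no minor of $G$ with minimum degree at least $3$ has more edges than $H$; all minor-3-cores of $G$ are isomorphic, so one speaks of the minor-3-core. Equivalently, it is the graph obtained by repeatedly contracting a vertex of degree at most $2$ into a neighbour and deleting isolated vertices until neither operation applies. *)

theory Defs
  imports Main
begin

type_synonym 'a graph = "'a set \<times> 'a set set"

definition simple_graph :: "'a graph \<Rightarrow> bool" where
  "simple_graph G \<longleftrightarrow> finite (fst G) \<and>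
     (\<forall>e\<in>snd G. \<exists>u v. u \<noteq> v \<and> e = {u, v} \<and> u \<in> fst G \<and> v \<in> fst G)"

definition degree :: "'a graph \<Rightarrow> 'a \<Rightarrow> nat" where
  "degree G v = card {w. {v, w} \<in> snd G}"

definition min_degree_ge :: "'a graph \<Rightarrow> nat \<Rightarrow> bool" where
  "min_degree_ge G d \<longleftrightarrow> (\<forall>v\<in>fst G. d \<le> degree G v)"

definition subgraph :: "'a graph \<Rightarrow> 'a graph \<Rightarrow> bool" where
  "subgraph H G \<longleftrightarrow> simple_graph H \<and> fst H \<subseteq> fst G \<and> snd H \<subseteq> snd G"

text \<open>Contracting vertex u into its neighbour v (the result keeps the name v).\<close>
definition contract :: "'a graph \<Rightarrow> 'a \<Rightarrow> 'a \<Rightarrow> 'a graph" where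
  "contract G u v = (fst G - {u},
     {e\<in>snd G. u \<notin> e} \<union> {{v, w} | w. {u, w} \<in> snd G \<and> w \<noteq> v})"

inductive is_minor :: "'a graph \<Rightarrow> 'a graph \<Rightarrow> bool" where
  refl: "is_minor G G"
| sub: "is_minor G H \<Longrightarrow> subgraph H' H \<Longrightarrow> is_minor G H'"
| contr: "is_minor G H \<Longrightarrow> {u, v} \<in> snd H \<Longrightarrow> u \<noteq> v \<Longrightarrow> is_minor G (contract H u v)"

definition minor_3_core :: "'a graph \<Rightarrow> 'a graph \<Rightarrow> bool" where
  "minor_3_core G H \<longleftrightarrow> is_minor G H \<and> min_degree_ge H 3 \<and>
     (\<forall>H'. is_minor G H' \<and> min_degree_ge H' 3 \<longrightarrow> card (snd H') \<le> card (snd H))"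

definition connected_in :: "'b set set \<Rightarrow> 'b set \<Rightarrow> bool" where
  "connected_in F S \<longleftrightarrow>
     (\<forall>x\<in>S. \<forall>y\<in>S. (x, y) \<in> ({(a, b). a \<in> S \<and> b \<in> S \<and> {a, b} \<in> F})\<^sup>*)"

text \<open>A (finite) tree: a nonempty connected graph with |E| = |V| - 1. Tree nodes are naturals,
  which loses no generality since every finite tree is isomorphic to one on naturals.\<close>
definition is_tree :: "nat graph \<Rightarrow> bool" where
  "is_tree T \<longleftrightarrow> simple_graph T \<and> fst T \<noteq> {} \<and> connected_in (snd T) (fst T) \<and>
     card (snd T) + 1 = card (fst T)"

definition tree_decomposition :: "'a graph \<Rightarrow> nat graph \<Rightarrow> (nat \<Rightarrow> 'a set) \<Rightarrow> bool" where
  "tree_decomposition G T B \<longleftrightarrow> is_tree T \<and>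
     (\<forall>v\<in>fst G. \<exists>t\<in>fst T. v \<in> B t) \<and>
     (\<forall>e\<in>snd G. \<exists>t\<in>fst T. e \<subseteq> B t) \<and>
     (\<forall>v\<in>fst G. connected_in (snd T) {t\<in>fst T. v \<in> B t})"

definition has_tw_at_most :: "'a graph \<Rightarrow> nat \<Rightarrow> bool" where
  "has_tw_at_most G k \<longleftrightarrow>
     (\<exists>T B. tree_decomposition G T B \<and> (\<forall>t\<in>fst T. card (B t) \<le> k + 1 \<and> finite (B t)))"

definition treewidth :: "'a graph \<Rightarrow> nat" where
  "treewidth G = (LEAST k. has_tw_at_most G k)"

end

theory Submission
  imports Defs
begin

text \<open>Minors do not increase treewidth, so tw H \<le> tw G. For the converse, keep a rooted
  model of H in G and eliminate vertices of degree at most 2: an isolated vertex is deleted, any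
  other one is contracted along an edge compatible with the model (inside its branch set, or an
  arbitrary edge if it lies in none). Undoing such a step costs at most width 2: the eliminated
  vertex and its at most two neighbours, which are adjacent after the contraction and hence share
  a bag, form a new leaf bag. The elimination ends in a minor of minimum degree at least 3 that
  still contains a model of H. By edge-maximality of H every edge of this minor joins two branch
  sets, so the connected branch sets are singletons and the minor is H itself. Hence
  tw G \<le> max (tw H) 2, and tw G \<ge> 3 gives tw H = tw G.\<close>

section \<open>Connected vertex sets\<close>

definition adjacent_within :: "'b set set \<Rightarrow> 'b set \<Rightarrow> ('b \<times> 'b) set" where
  "adjacent_within F S = {(a, b). a \<in> S \<and> b \<in> S \<and> {a, b} \<in> F}"

lemma connected_in_rtrancl: "connected_in F S \<longleftrightarrow> (\<forall>x\<in>S. \<forall>y\<in>S. (x, y) \<in> (adjacent_within F S)\<^sup>*)"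
  by (simp add: connected_in_def adjacent_within_def)

lemma connected_in_singleton: "connected_in F {a}"
  by (simp add: connected_in_def)

lemma connected_in_mono:
  assumes "connected_in F S" and "\<And>a b. a \<in> S \<Longrightarrow> b \<in> S \<Longrightarrow> {a, b} \<in> F \<Longrightarrow> {a, b} \<in> F'"
  shows "connected_in F' S"
proof -
  have "adjacent_within F S \<subseteq> adjacent_within F' S"
    using assms(2) by (auto simp: adjacent_within_def)
  then show ?thesis
    using assms(1) rtrancl_mono unfolding connected_in_rtrancl by blast
qed

lemma connected_in_Un:
  assumes "connected_in F S1" "connected_in F S2" "a \<in> S1" "b \<in> S2" "a = b \<or> {a, b} \<in> F"
  shows "connected_in F (S1 \<union> S2)"
proof -
  let ?R = "adjacent_within F (S1 \<union> S2)"
  have "(adjacent_within F S1)\<^sup>* \<subseteq> ?R\<^sup>*" "(adjacent_within F S2)\<^sup>* \<subseteq> ?R\<^sup>*"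
    by (auto intro!: rtrancl_mono simp: adjacent_within_def)
  moreover have "(a, b) \<in> ?R\<^sup>*" "(b, a) \<in> ?R\<^sup>*"
    using assms(3-5) by (auto simp: adjacent_within_def insert_commute)
  ultimately have "(x, a) \<in> ?R\<^sup>* \<and> (a, x) \<in> ?R\<^sup>*" if "x \<in> S1 \<union> S2" for x
    using that assms(1-4) unfolding connected_in_rtrancl by (blast intro: rtrancl_trans)
  then show ?thesis
    unfolding connected_in_rtrancl by (blast intro: rtrancl_trans)
qed

lemma connected_in_neighbour:
  assumes "connected_in F S" "a \<in> S" "b \<in> S" "a \<noteq> b"
  obtains c where "c \<in> S" "{a, c} \<in> F"
proof -
  have "(a, b) \<in> (adjacent_within F S)\<^sup>*"
    using assms(1-3) unfolding connected_in_rtrancl by blast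
  then show ?thesis
    using assms(4) that by (cases rule: converse_rtranclE) (auto simp: adjacent_within_def)
qed

lemma connected_in_image:
  assumes "connected_in F S"
    and "\<And>p q. p \<in> S \<Longrightarrow> q \<in> S \<Longrightarrow> {p, q} \<in> F \<Longrightarrow> r p = r q \<or> {r p, r q} \<in> F'"
  shows "connected_in F' (r ` S)"
  unfolding connected_in_rtrancl
proof (intro ballI)
  fix x y assume "x \<in> r ` S" "y \<in> r ` S"
  then obtain a b where ab: "a \<in> S" "b \<in> S" and xy: "x = r a" "y = r b" by blast
  have "(a, b) \<in> (adjacent_within F S)\<^sup>*"
    using assms(1) ab unfolding connected_in_rtrancl by blast
  then have "(r a, r b) \<in> (adjacent_within F' (r ` S))\<^sup>*"
  proof (induction rule: rtrancl_induct)
    case (step p q)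
    then have "r p = r q \<or> (r p, r q) \<in> adjacent_within F' (r ` S)"
      using assms(2) by (auto simp: adjacent_within_def)
    then show ?case
      using step.IH by (auto intro: rtrancl_into_rtrancl)
  qed simp
  then show "(x, y) \<in> (adjacent_within F' (r ` S))\<^sup>*"
    using xy by simp
qed

section \<open>Simple graphs, contraction and vertex deletion\<close>

lemma simple_graph_edgeE:
  assumes "simple_graph G" "e \<in> snd G"
  obtains u v where "u \<noteq> v" "e = {u, v}" "u \<in> fst G" "v \<in> fst G"
  using assms unfolding simple_graph_def by blast

lemma simple_graph_edgeD:
  assumes "simple_graph G" "{a, b} \<in> snd G"
  shows "a \<noteq> b" "a \<in> fst G" "b \<in> fst G"
  using assms by (auto elim: simple_graph_edgeE simp: doubleton_eq_iff)

lemma simple_graph_edge_subset: "simple_graph G \<Longrightarrow> e \<in> snd G \<Longrightarrow> e \<subseteq> fst G"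
  by (auto elim: simple_graph_edgeE)

lemma simple_graph_finite_vertices: "simple_graph G \<Longrightarrow> finite (fst G)"
  unfolding simple_graph_def by blast

lemma simple_graph_finite_edges:
  assumes "simple_graph G"
  shows "finite (snd G)"
proof -
  have "snd G \<subseteq> Pow (fst G)"
    using assms simple_graph_edge_subset by blast
  then show ?thesis
    using assms finite_subset simple_graph_finite_vertices by blast
qed

definition neighbours :: "'a graph \<Rightarrow> 'a \<Rightarrow> 'a set" where
  "neighbours G x = {w. {x, w} \<in> snd G}"

lemma degree_eq_card_neighbours: "degree G x = card (neighbours G x)"
  by (simp add: degree_def neighbours_def)

lemma neighbours_subset_vertices: "simple_graph G \<Longrightarrow> neighbours G x \<subseteq> fst G - {x}"
  unfolding neighbours_def using simple_graph_edgeD[of G x] by blast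

lemma finite_neighbours: "simple_graph G \<Longrightarrow> finite (neighbours G x)"
  using neighbours_subset_vertices simple_graph_finite_vertices
  by (metis finite_Diff finite_subset)

definition contract_map :: "'a \<Rightarrow> 'a \<Rightarrow> 'a \<Rightarrow> 'a" where
  "contract_map u v a = (if a = u then v else a)"

lemma contract_edge_iff:
  "e \<in> snd (contract G u v) \<longleftrightarrow>
     (e \<in> snd G \<and> u \<notin> e) \<or> (\<exists>w. e = {v, w} \<and> {u, w} \<in> snd G \<and> w \<noteq> v)"
  by (auto simp: contract_def)

lemma contract_vertices: "fst (contract G u v) = fst G - {u}"
  by (simp add: contract_def)

lemma contract_map_edge:
  assumes "{p, q} \<in> snd G" "contract_map u v p \<noteq> contract_map u v q"
  shows "{contract_map u v p, contract_map u v q} \<in> snd (contract G u v)"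
proof (cases "u \<in> {p, q}")
  case True
  then consider "p = u" "q \<noteq> u" | "q = u" "p \<noteq> u"
    using assms(2) by (auto simp: contract_map_def)
  then show ?thesis
  proof cases
    case 1
    then show ?thesis
      using assms unfolding contract_edge_iff contract_map_def by auto
  next
    case 2
    then have "{u, p} \<in> snd G" using assms(1) by (simp add: insert_commute)
    then show ?thesis
      using 2 assms(2) unfolding contract_edge_iff contract_map_def by (auto simp: insert_commute)
  qed
next
  case False
  then show ?thesis
    using assms unfolding contract_edge_iff contract_map_def by auto
qed

lemma inj_on_contract_map: "x \<in> {u, v} \<Longrightarrow> inj_on (contract_map u v) (S - {x})"
  unfolding inj_on_def contract_map_def by auto

lemma contract_map_image_iff:
  "u \<noteq> v \<Longrightarrow> x \<in> contract_map u v ` S \<longleftrightarrow> (if x = v then v \<in> S \<or> u \<in> S else x \<noteq> u \<and> x \<in> S)"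
  by (auto simp: contract_map_def image_iff)

lemma contract_edge_image:
  assumes G: "simple_graph G" and e: "e \<in> snd (contract G u v)"
  obtains e' where "e' \<in> snd G" "e = contract_map u v ` e'"
proof -
  consider "e \<in> snd G" "u \<notin> e" | w where "e = {v, w}" "{u, w} \<in> snd G" "w \<noteq> v"
    using e unfolding contract_edge_iff by blast
  then show ?thesis
  proof cases
    case 1
    then have "e = contract_map u v ` e"
      by (force simp: contract_map_def)
    then show ?thesis
      using 1 that by blast
  next
    case 2
    moreover have "w \<noteq> u"
      using simple_graph_edgeD(1)[OF G 2(2)] by simp
    ultimately show ?thesis
      using that[of "{u, w}"] by (simp add: contract_map_def insert_commute)
  qed
qed

lemma simple_graph_contract:
  assumes G: "simple_graph G" and uv: "{u, v} \<in> snd G"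
  shows "simple_graph (contract G u v)"
  unfolding simple_graph_def
proof (intro conjI ballI)
  show "finite (fst (contract G u v))"
    using G simple_graph_finite_vertices by (simp add: contract_vertices)
next
  fix e assume "e \<in> snd (contract G u v)"
  then consider "e \<in> snd G" "u \<notin> e" | w where "e = {v, w}" "{u, w} \<in> snd G" "w \<noteq> v"
    unfolding contract_edge_iff by blast
  then show "\<exists>a b. a \<noteq> b \<and> e = {a, b} \<and> a \<in> fst (contract G u v) \<and> b \<in> fst (contract G u v)"
  proof cases
    case 1
    then obtain a b where "a \<noteq> b" "e = {a, b}" "a \<in> fst G" "b \<in> fst G"
      using simple_graph_edgeE[OF G] by metis
    then show ?thesis
      using 1 unfolding contract_vertices by auto
  next
    case 2
    then show ?thesis
      using simple_graph_edgeD[OF G uv] simple_graph_edgeD[OF G 2(2)]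
      unfolding contract_vertices by auto
  qed
qed

lemma is_minor_simple_graph: "is_minor G H \<Longrightarrow> simple_graph G \<Longrightarrow> simple_graph H"
  by (induction rule: is_minor.induct) (simp_all add: subgraph_def simple_graph_contract)

lemma is_minor_trans: "is_minor G' H \<Longrightarrow> is_minor G G' \<Longrightarrow> is_minor G H"
  by (induction rule: is_minor.induct) (auto intro: is_minor.intros)

definition delete_vertex :: "'a graph \<Rightarrow> 'a \<Rightarrow> 'a graph" where
  "delete_vertex G x = (fst G - {x}, {e \<in> snd G. x \<notin> e})"

lemma subgraph_delete_vertex: "simple_graph G \<Longrightarrow> subgraph (delete_vertex G x) G"
  unfolding subgraph_def simple_graph_def delete_vertex_def by (simp; blast)

section \<open>Treewidth of minors\<close>

lemma tree_decompositionD: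
  assumes "tree_decomposition G T B"
  shows "is_tree T"
    and "v \<in> fst G \<Longrightarrow> \<exists>t\<in>fst T. v \<in> B t"
    and "e \<in> snd G \<Longrightarrow> \<exists>t\<in>fst T. e \<subseteq> B t"
    and "v \<in> fst G \<Longrightarrow> connected_in (snd T) {t \<in> fst T. v \<in> B t}"
  using assms unfolding tree_decomposition_def by blast+

lemma has_tw_at_most_card:
  assumes "simple_graph G"
  shows "has_tw_at_most G (card (fst G))"
proof -
  have "is_tree ({0}, {})"
    unfolding is_tree_def simple_graph_def connected_in_def by simp
  then have "tree_decomposition G ({0}, {}) (\<lambda>_. fst G)"
    using simple_graph_edge_subset[OF assms]
    unfolding tree_decomposition_def by (auto simp: connected_in_def)
  then show ?thesis
    using simple_graph_finite_vertices[OF assms] unfolding has_tw_at_most_def by fastforce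
qed

lemma has_tw_at_most_treewidth:
  assumes "simple_graph G"
  shows "has_tw_at_most G (treewidth G)"
  unfolding treewidth_def using has_tw_at_most_card[OF assms] by (rule LeastI)

lemma treewidth_le: "has_tw_at_most G k \<Longrightarrow> treewidth G \<le> k"
  unfolding treewidth_def by (rule Least_le)

lemma has_tw_at_most_subgraph:
  assumes HG: "subgraph H G" and tw: "has_tw_at_most G k"
  shows "has_tw_at_most H k"
proof -
  obtain T B where td: "tree_decomposition G T B"
    and bags: "\<forall>t\<in>fst T. card (B t) \<le> k + 1 \<and> finite (B t)"
    using tw unfolding has_tw_at_most_def by blast
  have "fst H \<subseteq> fst G" "snd H \<subseteq> snd G"
    using HG unfolding subgraph_def by auto
  with td have "tree_decomposition H T B"
    unfolding tree_decomposition_def by blast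
  with bags show ?thesis
    unfolding has_tw_at_most_def by blast
qed

lemma tree_decomposition_contract:
  assumes td: "tree_decomposition G T B" and G: "simple_graph G" and uv: "{u, v} \<in> snd G"
  shows "tree_decomposition (contract G u v) T (\<lambda>t. contract_map u v ` B t)"
proof -
  have uv': "u \<noteq> v" "u \<in> fst G" "v \<in> fst G"
    using simple_graph_edgeD[OF G uv] by auto
  note mem_image = contract_map_image_iff[OF uv'(1)]
  show ?thesis
    unfolding tree_decomposition_def
  proof (intro conjI ballI)
    show "is_tree T"
      using td by (rule tree_decompositionD)
  next
    fix x assume "x \<in> fst (contract G u v)"
    then show "\<exists>t\<in>fst T. x \<in> contract_map u v ` B t"
      using tree_decompositionD(2)[OF td] by (auto simp: contract_vertices mem_image)
  next
    fix e assume "e \<in> snd (contract G u v)"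
    then obtain e' where "e' \<in> snd G" "e = contract_map u v ` e'"
      using contract_edge_image[OF G] by metis
    then show "\<exists>t\<in>fst T. e \<subseteq> contract_map u v ` B t"
      using tree_decompositionD(3)[OF td] by (meson image_mono)
  next
    fix x assume "x \<in> fst (contract G u v)"
    then have x: "x \<in> fst G" "x \<noteq> u"
      by (auto simp: contract_vertices)
    show "connected_in (snd T) {t \<in> fst T. x \<in> contract_map u v ` B t}"
    proof (cases "x = v")
      case True
      obtain t where "t \<in> fst T" "{u, v} \<subseteq> B t"
        using tree_decompositionD(3)[OF td uv] by blast
      then have "connected_in (snd T) ({t \<in> fst T. v \<in> B t} \<union> {t \<in> fst T. u \<in> B t})"
        using tree_decompositionD(4)[OF td] uv' by (intro connected_in_Un) auto
      moreover have "{t \<in> fst T. x \<in> contract_map u v ` B t}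
          = {t \<in> fst T. v \<in> B t} \<union> {t \<in> fst T. u \<in> B t}"
        using True mem_image by auto
      ultimately show ?thesis
        by simp
    next
      case False
      then have "{t \<in> fst T. x \<in> contract_map u v ` B t} = {t \<in> fst T. x \<in> B t}"
        using x mem_image by auto
      then show ?thesis
        using tree_decompositionD(4)[OF td x(1)] by simp
    qed
  qed
qed

lemma has_tw_at_most_contract:
  assumes G: "simple_graph G" and uv: "{u, v} \<in> snd G" and tw: "has_tw_at_most G k"
  shows "has_tw_at_most (contract G u v) k"
proof -
  obtain T B where td: "tree_decomposition G T B"
    and bags: "\<And>t. t \<in> fst T \<Longrightarrow> card (B t) \<le> k + 1 \<and> finite (B t)"
    using tw unfolding has_tw_at_most_def by blast
  have "card (contract_map u v ` B t) \<le> k + 1 \<and> finite (contract_map u v ` B t)"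
    if "t \<in> fst T" for t
    using bags[OF that] card_image_le[of "B t" "contract_map u v"] by auto
  then show ?thesis
    using tree_decomposition_contract[OF td G uv] unfolding has_tw_at_most_def by blast
qed

lemma has_tw_at_most_minor:
  "is_minor G H \<Longrightarrow> simple_graph G \<Longrightarrow> has_tw_at_most G k \<Longrightarrow> has_tw_at_most H k"
proof (induction rule: is_minor.induct)
  case (sub G H H')
  then show ?case
    using has_tw_at_most_subgraph by metis
next
  case (contr G H u v)
  then show ?case
    using has_tw_at_most_contract[OF is_minor_simple_graph] by metis
qed simp

section \<open>Re-inserting a vertex of degree at most two\<close>

lemma connected_in_add_leaf:
  assumes conn: "connected_in F S" and t: "t \<in> S"
  shows "connected_in (insert {t, n} F) (insert n S)"
proof -
  have "connected_in (insert {t, n} F) (S \<union> {n})"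
    by (rule connected_in_Un[OF connected_in_mono[OF conn] connected_in_singleton t]) auto
  then show ?thesis
    by simp
qed

lemma is_tree_add_leaf:
  assumes T: "is_tree T" and t: "t \<in> fst T" and n: "n \<notin> fst T"
  shows "is_tree (insert n (fst T), insert {t, n} (snd T))"
proof -
  have simple: "simple_graph T" and conn: "connected_in (snd T) (fst T)"
    and card: "card (snd T) + 1 = card (fst T)"
    using T unfolding is_tree_def by auto
  have "t \<noteq> n"
    using t n by blast
  then have "simple_graph (insert n (fst T), insert {t, n} (snd T))"
    using simple t unfolding simple_graph_def by (simp; blast)
  moreover have "{t, n} \<notin> snd T"
    using simple_graph_edgeD(3)[OF simple] n by blast
  then have "card (insert {t, n} (snd T)) + 1 = card (insert n (fst T))"
    using card n simple_graph_finite_edges[OF simple] simple_graph_finite_vertices[OF simple]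
    by simp
  ultimately show ?thesis
    using connected_in_add_leaf[OF conn t] unfolding is_tree_def by simp
qed

text \<open>Bags of a tree decomposition need not consist of vertices, so x is removed from the old
  bags explicitly.\<close>

lemma tree_decomposition_add_leaf_bag:
  assumes G: "simple_graph G" and x: "x \<in> fst G"
    and td: "tree_decomposition (delete_vertex G x) T B"
    and t0: "t0 \<in> fst T" "neighbours G x \<subseteq> B t0" and n: "n \<notin> fst T"
  shows "tree_decomposition G (insert n (fst T), insert {t0, n} (snd T))
           (\<lambda>t. if t = n then insert x (neighbours G x) else B t - {x})"
    (is "tree_decomposition G ?T ?B")
  unfolding tree_decomposition_def
proof (intro conjI ballI)
  show "is_tree ?T"
    using is_tree_add_leaf[OF tree_decompositionD(1)[OF td] t0(1) n] .
next
  fix v assume "v \<in> fst G"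
  then show "\<exists>t\<in>fst ?T. v \<in> ?B t"
    using tree_decompositionD(2)[OF td, of v] n by (cases "v = x") (auto simp: delete_vertex_def)
next
  fix e assume e: "e \<in> snd G"
  show "\<exists>t\<in>fst ?T. e \<subseteq> ?B t"
  proof (cases "x \<in> e")
    case True
    then obtain w where "e = {x, w}"
      using e by (auto elim: simple_graph_edgeE[OF G])
    then have "e \<subseteq> ?B n"
      using e by (simp add: neighbours_def)
    then show ?thesis
      by auto
  next
    case False
    then obtain t where t: "t \<in> fst T" "e \<subseteq> B t"
      using tree_decompositionD(3)[OF td] e by (auto simp: delete_vertex_def)
    then have "e \<subseteq> ?B t" "t \<in> fst ?T"
      using False n by auto
    then show ?thesis
      by (rule bexI)
  qed
next
  fix v assume v: "v \<in> fst G"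
  let ?S = "{t \<in> fst T. v \<in> B t}"
  show "connected_in (snd ?T) {t \<in> fst ?T. v \<in> ?B t}"
  proof (cases "v = x")
    case True
    then have "{t \<in> fst ?T. v \<in> ?B t} = {n}"
      by auto
    then show ?thesis
      by (simp add: connected_in_singleton)
  next
    case False
    then have conn: "connected_in (snd T) ?S"
      using tree_decompositionD(4)[OF td] v by (simp add: delete_vertex_def)
    have "connected_in (snd ?T) ?S"
      by (rule connected_in_mono[OF conn]) simp
    moreover have "connected_in (snd ?T) (insert n ?S)" if "v \<in> neighbours G x"
      using connected_in_add_leaf[OF conn] t0 that by auto
    moreover have "{t \<in> fst ?T. v \<in> ?B t} = (if v \<in> neighbours G x then insert n ?S else ?S)"
      using False n by auto
    ultimately show ?thesis
      by simp
  qed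
qed

lemma has_tw_at_most_add_vertex:
  assumes G: "simple_graph G" and x: "x \<in> fst G" and deg: "degree G x \<le> 2"
    and td: "tree_decomposition (delete_vertex G x) T B"
    and bags: "\<And>t. t \<in> fst T \<Longrightarrow> card (B t) \<le> k + 1 \<and> finite (B t)"
    and t0: "t0 \<in> fst T" "neighbours G x \<subseteq> B t0"
  shows "has_tw_at_most G (max k 2)"
proof -
  have "finite (fst T)"
    using tree_decompositionD(1)[OF td] simple_graph_finite_vertices unfolding is_tree_def by blast
  then obtain n :: nat where n: "n \<notin> fst T"
    using ex_new_if_finite infinite_UNIV_nat by blast
  let ?B = "\<lambda>t. if t = n then insert x (neighbours G x) else B t - {x}"
  have "card (?B t) \<le> max k 2 + 1 \<and> finite (?B t)" if "t \<in> insert n (fst T)" for t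
  proof (cases "t = n")
    case True
    have "card (insert x (neighbours G x)) \<le> card (neighbours G x) + 1"
      by (simp add: card_insert_le_m1)
    then show ?thesis
      using True deg finite_neighbours[OF G] by (simp add: degree_eq_card_neighbours)
  next
    case False
    then show ?thesis
      using that bags[of t] card_Diff1_le[of "B t" x] by auto
  qed
  then show ?thesis
    using tree_decomposition_add_leaf_bag[OF G x td t0 n] unfolding has_tw_at_most_def by auto
qed

lemma tree_decomposition_pullback:
  assumes td: "tree_decomposition G' T B" and G: "simple_graph G"
    and vert: "\<phi> ` fst G \<subseteq> fst G'" and edge: "\<And>a b. {a, b} \<in> snd G \<Longrightarrow> {\<phi> a, \<phi> b} \<in> snd G'"
  shows "tree_decomposition G T (\<lambda>t. {a \<in> fst G. \<phi> a \<in> B t})"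
  unfolding tree_decomposition_def
proof (intro conjI ballI)
  show "is_tree T"
    using td by (rule tree_decompositionD)
next
  fix v assume "v \<in> fst G"
  then show "\<exists>t\<in>fst T. v \<in> {a \<in> fst G. \<phi> a \<in> B t}"
    using tree_decompositionD(2)[OF td] vert by blast
next
  fix e assume "e \<in> snd G"
  then obtain a b where "e = {a, b}" "a \<in> fst G" "b \<in> fst G" "{a, b} \<in> snd G"
    using simple_graph_edgeE[OF G] by metis
  then show "\<exists>t\<in>fst T. e \<subseteq> {a \<in> fst G. \<phi> a \<in> B t}"
    using tree_decompositionD(3)[OF td edge] by auto
next
  fix v assume "v \<in> fst G"
  then have "{t \<in> fst T. v \<in> {a \<in> fst G. \<phi> a \<in> B t}} = {t \<in> fst T. \<phi> v \<in> B t}"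
    by auto
  then show "connected_in (snd T) {t \<in> fst T. v \<in> {a \<in> fst G. \<phi> a \<in> B t}}"
    using tree_decompositionD(4)[OF td] vert \<open>v \<in> fst G\<close> by auto
qed

lemma tree_decomposition_clique_le_2:
  assumes td: "tree_decomposition G T B" and A: "A \<subseteq> fst G" "finite A" "card A \<le> 2"
    and clique: "\<And>a b. a \<in> A \<Longrightarrow> b \<in> A \<Longrightarrow> a \<noteq> b \<Longrightarrow> {a, b} \<in> snd G"
  obtains t where "t \<in> fst T" "A \<subseteq> B t"
proof -
  consider "A = {}" | a where "A = {a}" | a b where "a \<noteq> b" "A = {a, b}"
    using A(2,3) by (metis One_nat_def card_1_singletonE card_2_iff card_eq_0_iff le_0_eq le_SucE
        numeral_2_eq_2)
  then show ?thesis
  proof cases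
    case 1
    then show ?thesis
      using tree_decompositionD(1)[OF td] that unfolding is_tree_def by blast
  next
    case 2
    then show ?thesis
      using tree_decompositionD(2)[OF td] A(1) that by auto
  next
    case 3
    then show ?thesis
      using tree_decompositionD(3)[OF td clique] that by auto
  qed
qed

lemma contract_neighbours_adjacent:
  assumes G: "simple_graph G" and uv: "{u, v} \<in> snd G" and x: "x \<in> {u, v}"
    and deg: "degree G x \<le> 2" and ab: "a \<in> neighbours G x" "b \<in> neighbours G x" "a \<noteq> b"
  shows "{contract_map u v a, contract_map u v b} \<in> snd (contract G u v)"
proof -
  obtain y where y: "{x, y} = {u, v}"
    using x by blast
  then have "y \<in> neighbours G x"
    using uv by (simp add: neighbours_def)
  with ab deg have "a = y \<or> b = y"
    using finite_neighbours[OF G] unfolding degree_eq_card_neighbours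
    by (metis One_nat_def Suc_1 card_2_iff' card_le_Suc0_iff_eq le_SucE)
  then obtain z where z: "{a, b} = {y, z}" "z \<in> neighbours G x" "z \<noteq> y"
    using ab by blast
  then have "z \<notin> {u, v}"
    using y neighbours_subset_vertices[OF G] by (auto simp: doubleton_eq_iff)
  txt \<open>x and y are merged, so the edge xz becomes an edge between the images of y and z.\<close>
  then have "{contract_map u v x, contract_map u v z} \<in> snd (contract G u v)"
    using z(2) x by (intro contract_map_edge) (auto simp: neighbours_def contract_map_def)
  moreover have "contract_map u v x = contract_map u v y"
    using y by (auto simp: contract_map_def doubleton_eq_iff)
  moreover have "{contract_map u v a, contract_map u v b} = {contract_map u v y, contract_map u v z}"
    using z(1) by (auto simp: doubleton_eq_iff)
  ultimately show ?thesis
    by simp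
qed

lemma card_pullback_le:
  assumes "inj_on \<phi> A" "finite B"
  shows "card {a \<in> A. \<phi> a \<in> B} \<le> card B"
proof -
  have "inj_on \<phi> {a \<in> A. \<phi> a \<in> B}"
    using assms(1) by (rule inj_on_subset) auto
  then show ?thesis
    by (rule card_inj_on_le) (auto simp: assms(2))
qed

lemma has_tw_at_most_uncontract_low_degree:
  assumes G: "simple_graph G" and uv: "{u, v} \<in> snd G" and x: "x \<in> {u, v}"
    and deg: "degree G x \<le> 2" and tw: "has_tw_at_most (contract G u v) k"
  shows "has_tw_at_most G (max k 2)"
proof -
  let ?\<phi> = "contract_map u v"
  let ?G = "delete_vertex G x"
  obtain T B where td: "tree_decomposition (contract G u v) T B"
    and bags: "\<And>t. t \<in> fst T \<Longrightarrow> card (B t) \<le> k + 1 \<and> finite (B t)"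
    using tw unfolding has_tw_at_most_def by blast
  have inj: "inj_on ?\<phi> (fst ?G)"
    using inj_on_contract_map[OF x] by (simp add: delete_vertex_def)
  have vert: "?\<phi> ` fst ?G \<subseteq> fst (contract G u v)"
    using simple_graph_edgeD[OF G uv]
    by (auto simp: contract_map_def contract_vertices delete_vertex_def)
  have nbs: "neighbours G x \<subseteq> fst ?G" "finite (neighbours G x)"
    using neighbours_subset_vertices[OF G] finite_neighbours[OF G] by (auto simp: delete_vertex_def)
  obtain t0 where t0: "t0 \<in> fst T" "?\<phi> ` neighbours G x \<subseteq> B t0"
  proof (rule tree_decomposition_clique_le_2[OF td])
    show "?\<phi> ` neighbours G x \<subseteq> fst (contract G u v)"
      using vert nbs by blast
    show "card (?\<phi> ` neighbours G x) \<le> 2"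
      using deg card_image_le[OF nbs(2)] unfolding degree_eq_card_neighbours by (meson le_trans)
  qed (use nbs contract_neighbours_adjacent[OF G uv x deg] in auto)
  have "simple_graph ?G"
    using subgraph_delete_vertex[OF G] unfolding subgraph_def by blast
  then have "tree_decomposition ?G T (\<lambda>t. {a \<in> fst ?G. ?\<phi> a \<in> B t})"
  proof (rule tree_decomposition_pullback[OF td _ vert])
    fix a b assume "{a, b} \<in> snd ?G"
    then have ab: "{a, b} \<in> snd G" "a \<in> fst ?G" "b \<in> fst ?G"
      using simple_graph_edgeD[OF G] by (auto simp: delete_vertex_def)
    then have "?\<phi> a \<noteq> ?\<phi> b"
      using inj_onD[OF inj] simple_graph_edgeD(1)[OF G ab(1)] by blast
    then show "{?\<phi> a, ?\<phi> b} \<in> snd (contract G u v)"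
      using ab(1) by (intro contract_map_edge)
  qed
  moreover have "card {a \<in> fst ?G. ?\<phi> a \<in> B t} \<le> k + 1" if "t \<in> fst T" for t
    using card_pullback_le[OF inj] bags[OF that] by (meson le_trans)
  moreover have "finite {a \<in> fst ?G. ?\<phi> a \<in> B t}" for t
    using simple_graph_finite_vertices[OF G] by (simp add: delete_vertex_def)
  moreover have "neighbours G x \<subseteq> {a \<in> fst ?G. ?\<phi> a \<in> B t0}"
    using nbs t0(2) by auto
  moreover have "x \<in> fst G"
    using x simple_graph_edgeD[OF G uv] by blast
  ultimately show ?thesis
    using has_tw_at_most_add_vertex[OF G _ deg _ _ t0(1)] by blast
qed

lemma has_tw_at_most_add_isolated_vertex:
  assumes G: "simple_graph G" and x: "x \<in> fst G" and isolated: "neighbours G x = {}"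
    and tw: "has_tw_at_most (delete_vertex G x) k"
  shows "has_tw_at_most G (max k 2)"
proof -
  obtain T B where td: "tree_decomposition (delete_vertex G x) T B"
    and bags: "\<And>t. t \<in> fst T \<Longrightarrow> card (B t) \<le> k + 1 \<and> finite (B t)"
    using tw unfolding has_tw_at_most_def by blast
  obtain t0 where "t0 \<in> fst T"
    using tree_decompositionD(1)[OF td] unfolding is_tree_def by blast
  then show ?thesis
    using has_tw_at_most_add_vertex[OF G x _ td bags] isolated
    by (simp add: degree_eq_card_neighbours)
qed

section \<open>Rooted minor models\<close>

text \<open>X h is the branch set of h. Each branch set contains h itself, so a model whose branch
  sets are singletons identifies H with a subgraph of G literally, not just up to isomorphism.\<close>

definition rooted_model :: "'a graph \<Rightarrow> 'a graph \<Rightarrow> ('a \<Rightarrow> 'a set) \<Rightarrow> bool" where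
  "rooted_model G H X \<longleftrightarrow>
     (\<forall>h\<in>fst H. h \<in> X h \<and> X h \<subseteq> fst G \<and> connected_in (snd G) (X h)) \<and>
     (\<forall>h\<in>fst H. \<forall>h'\<in>fst H. h \<noteq> h' \<longrightarrow> X h \<inter> X h' = {}) \<and>
     (\<forall>h h'. {h, h'} \<in> snd H \<longrightarrow> (\<exists>a\<in>X h. \<exists>b\<in>X h'. {a, b} \<in> snd G))"

lemma rooted_modelD:
  assumes "rooted_model G H X"
  shows "h \<in> fst H \<Longrightarrow> h \<in> X h"
    and "h \<in> fst H \<Longrightarrow> X h \<subseteq> fst G"
    and "h \<in> fst H \<Longrightarrow> connected_in (snd G) (X h)"
    and "h \<in> fst H \<Longrightarrow> h' \<in> fst H \<Longrightarrow> a \<in> X h \<Longrightarrow> a \<in> X h' \<Longrightarrow> h = h'"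
    and "{h, h'} \<in> snd H \<Longrightarrow> \<exists>a\<in>X h. \<exists>b\<in>X h'. {a, b} \<in> snd G"
  using assms unfolding rooted_model_def by blast+

lemma rooted_model_refl: "rooted_model G G (\<lambda>h. {h})"
  unfolding rooted_model_def by (auto simp: connected_in_singleton)

lemma rooted_model_subgraph: "rooted_model G H X \<Longrightarrow> subgraph H' H \<Longrightarrow> rooted_model G H' X"
  unfolding rooted_model_def subgraph_def by (meson subsetD)

lemma rooted_model_contract_minor:
  assumes X: "rooted_model G H X" and H: "simple_graph H" and uv: "{u, v} \<in> snd H"
  shows "rooted_model G (contract H u v) (X(v := X u \<union> X v))"
proof -
  let ?X = "X(v := X u \<union> X v)"
  have uv': "u \<noteq> v" "u \<in> fst H" "v \<in> fst H"
    using simple_graph_edgeD[OF H uv] by auto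
  have larger: "X h \<subseteq> ?X h" for h
    by auto
  show ?thesis
    unfolding rooted_model_def
  proof (intro conjI ballI allI impI)
    fix h assume "h \<in> fst (contract H u v)"
    then have h: "h \<in> fst H" "h \<noteq> u"
      by (auto simp: contract_vertices)
    show "h \<in> ?X h"
      using rooted_modelD(1)[OF X h(1)] larger by blast
    show "?X h \<subseteq> fst G"
      using rooted_modelD(2)[OF X] h(1) uv' by auto
    obtain a b where "a \<in> X u" "b \<in> X v" "{a, b} \<in> snd G"
      using rooted_modelD(5)[OF X uv] by blast
    then have "connected_in (snd G) (X u \<union> X v)"
      using rooted_modelD(3)[OF X] uv' by (intro connected_in_Un) auto
    then show "connected_in (snd G) (?X h)"
      using rooted_modelD(3)[OF X h(1)] by simp
  next
    fix h h' assume "h \<in> fst (contract H u v)" "h' \<in> fst (contract H u v)" "h \<noteq> h'"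
    then show "?X h \<inter> ?X h' = {}"
      using rooted_modelD(4)[OF X] uv' by (auto simp: contract_vertices)
  next
    fix h h' assume "{h, h'} \<in> snd (contract H u v)"
    then consider "{h, h'} \<in> snd H" | w where "{h, h'} = {v, w}" "{u, w} \<in> snd H" "w \<noteq> v"
      unfolding contract_edge_iff by blast
    then show "\<exists>a\<in>?X h. \<exists>b\<in>?X h'. {a, b} \<in> snd G"
    proof cases
      case 1
      then show ?thesis
        using rooted_modelD(5)[OF X] larger by blast
    next
      case 2
      obtain a b where ab: "a \<in> X u" "b \<in> X w" "{a, b} \<in> snd G"
        using rooted_modelD(5)[OF X 2(2)] by blast
      then have "a \<in> ?X v" "b \<in> ?X w" "{b, a} \<in> snd G"
        using 2(3) by (auto simp: insert_commute)
      then show ?thesis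
        using 2(1) ab(3) by (metis doubleton_eq_iff)
    qed
  qed
qed

lemma is_minor_rooted_model: "is_minor G H \<Longrightarrow> simple_graph G \<Longrightarrow> \<exists>X. rooted_model G H X"
proof (induction rule: is_minor.induct)
  case (refl G)
  then show ?case
    using rooted_model_refl by blast
next
  case (sub G H H')
  then show ?case
    using rooted_model_subgraph by blast
next
  case (contr G H u v)
  then obtain X where X: "rooted_model G H X"
    by blast
  have "simple_graph H"
    using is_minor_simple_graph[OF contr.hyps(1) contr.prems] .
  then have "rooted_model G (contract H u v) (X(v := X u \<union> X v))"
    by (rule rooted_model_contract_minor[OF X _ contr.hyps(2)])
  then show ?case
    by blast
qed

lemma rooted_model_delete_vertex:
  assumes X: "rooted_model G H X" and H: "simple_graph H" and x: "\<And>h. h \<in> fst H \<Longrightarrow> x \<notin> X h"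
  shows "rooted_model (delete_vertex G x) H X"
  unfolding rooted_model_def
proof (intro conjI ballI allI impI)
  fix h assume h: "h \<in> fst H"
  show "h \<in> X h"
    using rooted_modelD(1)[OF X h] .
  show "X h \<subseteq> fst (delete_vertex G x)"
    using rooted_modelD(2)[OF X h] x[OF h] by (auto simp: delete_vertex_def)
  show "connected_in (snd (delete_vertex G x)) (X h)"
    using rooted_modelD(3)[OF X h]
    by (rule connected_in_mono) (use x[OF h] in \<open>auto simp: delete_vertex_def\<close>)
next
  fix h h' assume "h \<in> fst H" "h' \<in> fst H" "h \<noteq> h'"
  then show "X h \<inter> X h' = {}"
    using rooted_modelD(4)[OF X] by blast
next
  fix h h' assume hh: "{h, h'} \<in> snd H"
  then have "x \<notin> X h" "x \<notin> X h'"
    using x simple_graph_edgeD[OF H hh] by auto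
  then show "\<exists>a\<in>X h. \<exists>b\<in>X h'. {a, b} \<in> snd (delete_vertex G x)"
    using rooted_modelD(5)[OF X hh] by (fastforce simp: delete_vertex_def)
qed

lemma rooted_model_contract:
  assumes X: "rooted_model G H X" and G: "simple_graph G" and H: "simple_graph H"
    and uv: "{u, v} \<in> snd G" and branch: "\<And>h. h \<in> fst H \<Longrightarrow> u \<in> X h \<Longrightarrow> v \<in> X h \<and> u \<noteq> h"
  shows "rooted_model (contract G u v) H (\<lambda>h. X h - {u})"
proof -
  have "u \<noteq> v"
    using simple_graph_edgeD[OF G uv] by simp
  then have image: "contract_map u v ` X h = X h - {u}" if "h \<in> fst H" for h
    using branch[OF that] by (auto simp: contract_map_def image_iff)
  show ?thesis
    unfolding rooted_model_def
  proof (intro conjI ballI allI impI)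
    fix h assume h: "h \<in> fst H"
    show "h \<in> X h - {u}"
      using rooted_modelD(1)[OF X h] branch[OF h] by auto
    show "X h - {u} \<subseteq> fst (contract G u v)"
      using rooted_modelD(2)[OF X h] by (auto simp: contract_vertices)
    have "connected_in (snd (contract G u v)) (contract_map u v ` X h)"
      using rooted_modelD(3)[OF X h] by (rule connected_in_image) (use contract_map_edge in metis)
    then show "connected_in (snd (contract G u v)) (X h - {u})"
      using image[OF h] by simp
  next
    fix h h' assume "h \<in> fst H" "h' \<in> fst H" "h \<noteq> h'"
    then show "(X h - {u}) \<inter> (X h' - {u}) = {}"
      using rooted_modelD(4)[OF X] by blast
  next
    fix h h' assume hh: "{h, h'} \<in> snd H"
    then have h: "h \<in> fst H" "h' \<in> fst H" "h \<noteq> h'"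
      using simple_graph_edgeD[OF H] by auto
    obtain a b where ab: "a \<in> X h" "b \<in> X h'" "{a, b} \<in> snd G"
      using rooted_modelD(5)[OF X hh] by blast
    then have "contract_map u v a \<in> X h - {u}" "contract_map u v b \<in> X h' - {u}"
      using image h by blast+
    moreover from this have "contract_map u v a \<noteq> contract_map u v b"
      using rooted_modelD(4)[OF X h(1,2)] h(3) by (metis DiffD1)
    ultimately show "\<exists>a\<in>X h - {u}. \<exists>b\<in>X h' - {u}. {a, b} \<in> snd (contract G u v)"
      using contract_map_edge[OF ab(3)] by blast
  qed
qed

definition branch_owner :: "'a graph \<Rightarrow> ('a \<Rightarrow> 'a set) \<Rightarrow> 'a \<Rightarrow> 'a" where
  "branch_owner H X a = (THE h. h \<in> fst H \<and> a \<in> X h)"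

lemma branch_owner_eq:
  assumes "rooted_model G H X" "h \<in> fst H" "a \<in> X h"
  shows "branch_owner H X a = h"
  unfolding branch_owner_def
  using assms rooted_modelD(4)[OF assms(1)] by (intro the_equality) blast+

lemma rooted_model_low_degree_neighbour:
  assumes X: "rooted_model G H X" and G: "simple_graph G" and H: "simple_graph H"
    and md: "min_degree_ge H 3" and h: "h \<in> fst H" "x \<in> X h" and deg: "degree G x < 3"
  obtains y where "y \<in> X h" "{x, y} \<in> snd G"
proof -
  have "\<exists>y\<in>X h. {x, y} \<in> snd G"
  proof (rule ccontr)
    assume "\<not> (\<exists>y\<in>X h. {x, y} \<in> snd G)"
    then have single: "X h \<subseteq> {x}"
      using connected_in_neighbour[OF rooted_modelD(3)[OF X h(1)] h(2)] by blast
    have "neighbours H h \<subseteq> branch_owner H X ` neighbours G x"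
    proof
      fix w assume "w \<in> neighbours H h"
      then have hw: "{h, w} \<in> snd H" "w \<in> fst H"
        using simple_graph_edgeD[OF H] by (auto simp: neighbours_def)
      obtain a b where "a \<in> X h" "b \<in> X w" "{a, b} \<in> snd G"
        using rooted_modelD(5)[OF X hw(1)] by blast
      then have "b \<in> neighbours G x" "branch_owner H X b = w"
        using single branch_owner_eq[OF X hw(2)] by (auto simp: neighbours_def)
      then show "w \<in> branch_owner H X ` neighbours G x"
        by blast
    qed
    then have "card (neighbours H h) \<le> card (neighbours G x)"
      using finite_neighbours[OF G] by (meson card_image_le card_mono finite_imageI le_trans)
    then show False
      using md h(1) deg unfolding min_degree_ge_def degree_eq_card_neighbours by fastforce
  qed
  then show ?thesis
    using that by blast
qed

lemma rooted_model_edge_representatives: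
  assumes X: "rooted_model G H X" and H: "simple_graph H"
  obtains f where "\<And>e. e \<in> snd H \<Longrightarrow> f e \<in> snd G"
    and "\<And>e. e \<in> snd H \<Longrightarrow> f e \<subseteq> \<Union>(X ` fst H)"
    and "\<And>e. e \<in> snd H \<Longrightarrow> branch_owner H X ` f e = e"
proof -
  have "\<exists>d. d \<in> snd G \<and> d \<subseteq> \<Union>(X ` fst H) \<and> branch_owner H X ` d = e" if e: "e \<in> snd H" for e
  proof -
    obtain h h' where hh: "e = {h, h'}" "h \<in> fst H" "h' \<in> fst H"
      using simple_graph_edgeE[OF H e] by metis
    obtain a b where "a \<in> X h" "b \<in> X h'" "{a, b} \<in> snd G"
      using rooted_modelD(5)[OF X] e hh(1) by blast
    then show ?thesis
      using hh branch_owner_eq[OF X] by (intro exI[of _ "{a, b}"]) auto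
  qed
  then show ?thesis
    using that by metis
qed

lemma rooted_model_edges_between_branch_sets:
  assumes X: "rooted_model G H X" and G: "simple_graph G" and H: "simple_graph H"
    and card: "card (snd G) \<le> card (snd H)" and d: "d \<in> snd G"
  shows "d \<subseteq> \<Union>(X ` fst H)" and "branch_owner H X ` d \<in> snd H"
proof -
  obtain f where f: "\<And>e. e \<in> snd H \<Longrightarrow> f e \<in> snd G"
    "\<And>e. e \<in> snd H \<Longrightarrow> f e \<subseteq> \<Union>(X ` fst H)" "\<And>e. e \<in> snd H \<Longrightarrow> branch_owner H X ` f e = e"
    using rooted_model_edge_representatives[OF X H] by blast
  have "inj_on f (snd H)"
    using f(3) by (rule inj_on_inverseI)
  then have "f ` snd H = snd G"
    using f(1) card simple_graph_finite_edges[OF G] by (intro card_seteq) (auto simp: card_image)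
  then obtain e where "e \<in> snd H" "d = f e"
    using d by blast
  then show "d \<subseteq> \<Union>(X ` fst H)" "branch_owner H X ` d \<in> snd H"
    using f(2,3) by auto
qed

lemma rooted_model_singletons:
  assumes X: "rooted_model G H X" and G: "simple_graph G" and H: "simple_graph H"
    and card: "card (snd G) \<le> card (snd H)" and h: "h \<in> fst H"
  shows "X h = {h}"
proof (rule ccontr)
  assume "X h \<noteq> {h}"
  then obtain c where c: "c \<in> X h" "h \<noteq> c"
    using rooted_modelD(1)[OF X h] by blast
  obtain c' where c': "c' \<in> X h" "{h, c'} \<in> snd G"
    using connected_in_neighbour[OF rooted_modelD(3)[OF X h] rooted_modelD(1)[OF X h] c] .
  then have "{h} \<in> snd H"
    using rooted_model_edges_between_branch_sets(2)[OF X G H card c'(2)]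
      branch_owner_eq[OF X h] rooted_modelD(1)[OF X h] by auto
  then show False
    using simple_graph_edgeD(1)[OF H, of h h] by simp
qed

lemma rooted_model_eq:
  assumes X: "rooted_model G H X" and G: "simple_graph G" and H: "simple_graph H"
    and md: "min_degree_ge G 3" and card: "card (snd G) \<le> card (snd H)"
  shows "H = G"
proof -
  note between = rooted_model_edges_between_branch_sets[OF X G H card]
  note single = rooted_model_singletons[OF X G H card]
  have owner: "branch_owner H X a = a" if "a \<in> \<Union>(X ` fst H)" for a
    using that single branch_owner_eq[OF X] by auto
  have "snd G \<subseteq> snd H"
  proof
    fix d assume d: "d \<in> snd G"
    then have "\<forall>a\<in>d. branch_owner H X a = a"
      using between(1)[OF d] owner by blast
    then have "branch_owner H X ` d = d"
      by force
    then show "d \<in> snd H"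
      using between(2)[OF d] by simp
  qed
  moreover have "snd H \<subseteq> snd G"
  proof
    fix e assume e: "e \<in> snd H"
    then obtain h h' where "e = {h, h'}" "h \<in> fst H" "h' \<in> fst H"
      using simple_graph_edgeE[OF H] by metis
    then show "e \<in> snd G"
      using rooted_modelD(5)[OF X] e single by fastforce
  qed
  ultimately have edges: "snd G = snd H"
    by blast
  have "fst G \<subseteq> fst H"
  proof
    fix v assume "v \<in> fst G"
    then have "neighbours G v \<noteq> {}"
      using md unfolding min_degree_ge_def degree_eq_card_neighbours by fastforce
    then obtain w where "{v, w} \<in> snd H"
      using edges by (auto simp: neighbours_def)
    then show "v \<in> fst H"
      using simple_graph_edgeD(2)[OF H] by blast
  qed
  moreover have "fst H \<subseteq> fst G"
    using rooted_modelD(1,2)[OF X] by blast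
  ultimately show ?thesis
    using edges by (simp add: prod_eq_iff)
qed

section \<open>Eliminating vertices of low degree\<close>

lemma rooted_model_low_degree_cases:
  assumes X: "rooted_model G H X" and G: "simple_graph G" and H: "simple_graph H"
    and md: "min_degree_ge H 3" and deg: "degree G x < 3"
  obtains "neighbours G x = {}" "\<And>h. h \<in> fst H \<Longrightarrow> x \<notin> X h"
  | u v where "{u, v} \<in> snd G" "x \<in> {u, v}" "\<And>h. h \<in> fst H \<Longrightarrow> u \<in> X h \<Longrightarrow> v \<in> X h \<and> u \<noteq> h"
proof (cases "\<exists>h\<in>fst H. x \<in> X h")
  case True
  then obtain h where h: "h \<in> fst H" "x \<in> X h"
    by blast
  obtain y where y: "y \<in> X h" "{x, y} \<in> snd G"
    using rooted_model_low_degree_neighbour[OF X G H md h deg] .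
  have unique: "h' = h" if "h' \<in> fst H" "a \<in> X h'" "a \<in> X h" for h' a
    using rooted_modelD(4)[OF X that(1) h(1) that(2,3)] .
  show ?thesis
  proof (cases "x = h")
    case True
    txt \<open>The root h has to survive, so its neighbour y is contracted into it.\<close>
    have "y \<noteq> x"
      using simple_graph_edgeD(1)[OF G y(2)] by simp
    moreover have "{y, x} \<in> snd G"
      using y(2) by (simp add: insert_commute)
    ultimately show ?thesis
      using that(2)[of y x] unique y(1) h(2) True by blast
  next
    case False
    then show ?thesis
      using that(2)[of x y] unique y h(2) by blast
  qed
next
  case unassigned: False
  show ?thesis
  proof (cases "neighbours G x = {}")
    case True
    then show ?thesis
      using that(1) unassigned by blast
  next
    case False
    then obtain y where "{x, y} \<in> snd G"
      by (auto simp: neighbours_def)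
    then show ?thesis
      using that(2)[of x y] unassigned by blast
  qed
qed

lemma rooted_model_low_degree_reduction:
  assumes X: "rooted_model G H X" and G: "simple_graph G" and H: "simple_graph H"
    and md: "min_degree_ge H 3" and x: "x \<in> fst G" and deg: "degree G x < 3"
  obtains G' X' where "is_minor G G'" "card (fst G') < card (fst G)" "rooted_model G' H X'"
    and "\<And>k. has_tw_at_most G' k \<Longrightarrow> has_tw_at_most G (max k 2)"
  using rooted_model_low_degree_cases[OF X G H md deg]
proof cases
  case 1
  show ?thesis
  proof (rule that)
    show "is_minor G (delete_vertex G x)"
      using is_minor.sub[OF is_minor.refl subgraph_delete_vertex[OF G]] .
    show "card (fst (delete_vertex G x)) < card (fst G)"
      unfolding delete_vertex_def fst_conv
      using simple_graph_finite_vertices[OF G] x by (rule card_Diff1_less)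
    show "rooted_model (delete_vertex G x) H X"
      using X H 1(2) by (rule rooted_model_delete_vertex)
    show "has_tw_at_most G (max k 2)" if "has_tw_at_most (delete_vertex G x) k" for k
      using has_tw_at_most_add_isolated_vertex[OF G x 1(1) that] .
  qed
next
  case (2 u v)
  show ?thesis
  proof (rule that)
    have "u \<noteq> v" "u \<in> fst G"
      using simple_graph_edgeD[OF G 2(1)] by auto
    then show "is_minor G (contract G u v)"
      using is_minor.contr[OF is_minor.refl 2(1)] by blast
    show "card (fst (contract G u v)) < card (fst G)"
      unfolding contract_vertices
      using simple_graph_finite_vertices[OF G] \<open>u \<in> fst G\<close> by (rule card_Diff1_less)
    show "rooted_model (contract G u v) H (\<lambda>h. X h - {u})"
      using X G H 2(1,3) by (rule rooted_model_contract)
    show "has_tw_at_most G (max k 2)" if "has_tw_at_most (contract G u v) k" for k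
      using deg has_tw_at_most_uncontract_low_degree[OF G 2(1,2) _ that] by simp
  qed
qed

lemma treewidth_le_rooted_model:
  assumes "simple_graph G" "simple_graph H" "min_degree_ge H 3" "rooted_model G H X"
    and "\<And>H'. is_minor G H' \<Longrightarrow> min_degree_ge H' 3 \<Longrightarrow> card (snd H') \<le> card (snd H)"
  shows "treewidth G \<le> max (treewidth H) 2"
  using assms
proof (induction "card (fst G)" arbitrary: G X rule: less_induct)
  case less
  show ?case
  proof (cases "min_degree_ge G 3")
    case True
    then have "H = G"
      using rooted_model_eq[OF less.prems(4,1,2) True] less.prems(5)[OF is_minor.refl] by blast
    then show ?thesis
      by simp
  next
    case False
    then obtain x where x: "x \<in> fst G" "degree G x < 3"
      unfolding min_degree_ge_def by auto
    obtain G' X' where G': "is_minor G G'" "card (fst G') < card (fst G)" "rooted_model G' H X'"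
      and tw: "\<And>k. has_tw_at_most G' k \<Longrightarrow> has_tw_at_most G (max k 2)"
      using rooted_model_low_degree_reduction[OF less.prems(4,1,2,3) x] by blast
    have "simple_graph G'"
      using is_minor_simple_graph[OF G'(1) less.prems(1)] .
    then have "treewidth G' \<le> max (treewidth H) 2"
      using less.hyps[OF G'(2) _ less.prems(2,3) G'(3)] less.prems(5) is_minor_trans[OF _ G'(1)]
      by blast
    moreover have "treewidth G \<le> max (treewidth G') 2"
      using tw[OF has_tw_at_most_treewidth[OF \<open>simple_graph G'\<close>]] by (rule treewidth_le)
    ultimately show ?thesis
      by simp
  qed
qed

theorem theorem23:
  fixes G H :: "'a graph" and k :: nat
  assumes "simple_graph G"
    and "treewidth G = k"
    and "k \<ge> 3"
    and "minor_3_core G H"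
  shows "treewidth H = k"
proof -
  have minor: "is_minor G H" and md: "min_degree_ge H 3"
    and maximal: "\<And>H'. is_minor G H' \<Longrightarrow> min_degree_ge H' 3 \<Longrightarrow> card (snd H') \<le> card (snd H)"
    using assms(4) unfolding minor_3_core_def by auto
  have H: "simple_graph H"
    using is_minor_simple_graph[OF minor assms(1)] .
  obtain X where "rooted_model G H X"
    using is_minor_rooted_model[OF minor assms(1)] by blast
  then have "treewidth G \<le> max (treewidth H) 2"
    using treewidth_le_rooted_model[OF assms(1) H md _ maximal] by blast
  moreover have "treewidth H \<le> treewidth G"
    using has_tw_at_most_minor[OF minor assms(1) has_tw_at_most_treewidth[OF assms(1)]]
    by (rule treewidth_le)
  ultimately show ?thesis
    using assms(2,3) by linarith
qed

end
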